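(* If every geodesic on $\Sigma_\Gamma$ intersects the open ball $B(\pi(x),\rho)$, then $S^+(\ell,\rho,x)$ is $\varepsilon$-relatively dense for some real $\varepsilon>0$.
   Context: $\mathbb{D}=\{z\in\mathbb{C}:|z|<1\}$ with hyperbolic metric $d$ induced by $ds=2|dz|/(1-|z|^2)$; geodesics are parametrised with unit speed and the normal bundle of an oriented geodesic is oriented by the standard orientation of $\mathbb{D}$ and that of the geodesic. Standing setting: $\Gamma$ is a cocompact Fuchsian group with fundamental domain $\tau$ a hyperbolic polygon whose side-pairing generators are none of them their own inverse; $\Sigma_\Gamma=\Gamma\backslash\mathbb{D}$ with quotient map $\pi$ and induced metric; $\ell$ is a geodesic in $\mathbb{D}$ with unit-speed parametrisation $\kappa_\ell$ such that the image of $\{(\kappa_\ell(t),\kappa_\ell'(t))\}$ in $\operatorname{ST}(\Sigma_\Gamma)$ is a dense orbit of the geodesic flow; $x\in\tau^\circ$ and $\rho>0$. For a geodesic $k$ with unit-speed parametrisation $\kappa$: $\overline{\mathcal{N}(k,\rho)}^+$ is the union of $\{y:d(y,k)<\rho\}$ with the component of its boundary on the positive side of $k$; $p_k$ is orthogonal projection onto $k$; $S^+(k,\rho,x)=\kappa^{-1}(p_k(\Gamma(x)\cap\overline{\mathcal{N}(k,\rho)}^+))\subseteq\mathbb{R}$. A set $S\subseteq\mathbb{R}$ is $\varepsilon$-relatively dense if every $t\in\mathbb{R}$ has some $s\in S$ with $|t-s|\le\varepsilon$. *)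

theory Defs
  imports "HOL-Analysis.Analysis"
begin

definition disc :: "complex set" where
  "disc = ball 0 1"

text \<open>Distance induced by ds = 2|dz|/(1-|z|^2).\<close>
definition hdist :: "complex \<Rightarrow> complex \<Rightarrow> real" where
  "hdist z w = arcosh (1 + 2 * (cmod (z - w))^2 / ((1 - (cmod z)^2) * (1 - (cmod w)^2)))"

definition hdist_set :: "complex \<Rightarrow> complex set \<Rightarrow> real" where
  "hdist_set y A = (INF a\<in>A. hdist y a)"

text \<open>Orientation preserving isometries of the disc, acting on the disc and
  extended by the identity outside the disc (so that composition of functions is
  composition of isometries).\<close>
definition disc_isom :: "(complex \<Rightarrow> complex) \<Rightarrow> bool" where
  "disc_isom f \<longleftrightarrow>
     (\<exists>a b. (cmod a)^2 - (cmod b)^2 = 1 \<and>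
        (\<forall>z\<in>disc. f z = (a * z + b) / (cnj b * z + cnj a))) \<and>
     (\<forall>z. z \<notin> disc \<longrightarrow> f z = z)"

text \<open>Fuchsian group: discrete subgroup (equivalently, acting properly discontinuously).\<close>
definition fuchsian_group :: "(complex \<Rightarrow> complex) set \<Rightarrow> bool" where
  "fuchsian_group G \<longleftrightarrow>
     (\<forall>g\<in>G. disc_isom g) \<and> id \<in> G \<and> (\<forall>g\<in>G. \<forall>h\<in>G. g \<circ> h \<in> G) \<and>
     (\<forall>g\<in>G. inv g \<in> G) \<and>
     (\<forall>K. compact K \<and> K \<subseteq> disc \<longrightarrow> finite {g\<in>G. g ` K \<inter> K \<noteq> {}})"

definition cocompact_fuchsian :: "(complex \<Rightarrow> complex) set \<Rightarrow> bool" where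
  "cocompact_fuchsian G \<longleftrightarrow> fuchsian_group G \<and>
     (\<exists>K. compact K \<and> K \<subseteq> disc \<and> (\<Union>g\<in>G. g ` K) = disc)"

definition gorbit :: "(complex \<Rightarrow> complex) set \<Rightarrow> complex \<Rightarrow> complex set" where
  "gorbit G x = (\<lambda>g. g x) ` G"

definition hsegment :: "complex \<Rightarrow> complex \<Rightarrow> complex set" where
  "hsegment a b = {z\<in>disc. hdist a z + hdist z b = hdist a b}"

definition hconvex :: "complex set \<Rightarrow> bool" where
  "hconvex S \<longleftrightarrow> S \<subseteq> disc \<and> (\<forall>a\<in>S. \<forall>b\<in>S. hsegment a b \<subseteq> S)"

definition hyp_polygon :: "complex set \<Rightarrow> bool" where
  "hyp_polygon P \<longleftrightarrow> (\<exists>V. finite V \<and> V \<subseteq> disc \<and> P = hconvex hull V) \<and> interior P \<noteq> {}"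

definition fundamental_polygon :: "(complex \<Rightarrow> complex) set \<Rightarrow> complex set \<Rightarrow> bool" where
  "fundamental_polygon G P \<longleftrightarrow> hyp_polygon P \<and> (\<Union>g\<in>G. g ` P) = disc \<and>
     (\<forall>g\<in>G. g \<noteq> id \<longrightarrow> interior P \<inter> g ` (interior P) = {})"

text \<open>Side-pairing generators are the g \<noteq> id with P \<inter> g P a (non-degenerate) side;
  none of them is its own inverse.\<close>
definition side_pairings_not_self_inverse :: "(complex \<Rightarrow> complex) set \<Rightarrow> complex set \<Rightarrow> bool" where
  "side_pairings_not_self_inverse G P \<longleftrightarrow>
     (\<forall>g\<in>G. g \<noteq> id \<and> infinite (P \<inter> g ` P) \<longrightarrow> g \<circ> g \<noteq> id)"

definition geodesic_line :: "(real \<Rightarrow> complex) \<Rightarrow> bool" where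
  "geodesic_line \<kappa> \<longleftrightarrow> range \<kappa> \<subseteq> disc \<and> (\<forall>s t. hdist (\<kappa> s) (\<kappa> t) = \<bar>s - t\<bar>)"

text \<open>The image of the orbit of (kappa t, kappa' t) is dense in ST(Sigma): its
  Gamma-saturation is dense in the unit tangent bundle of the disc.\<close>
definition dense_geodesic :: "(complex \<Rightarrow> complex) set \<Rightarrow> (real \<Rightarrow> complex) \<Rightarrow> bool" where
  "dense_geodesic G \<kappa> \<longleftrightarrow>
     (\<forall>y v e. y \<in> disc \<and> cmod v = (1 - (cmod y)^2) / 2 \<and> e > 0 \<longrightarrow>
        (\<exists>t. \<exists>g\<in>G. cmod (g (\<kappa> t) - y) < e \<and>
              cmod (vector_derivative (g \<circ> \<kappa>) (at t) - v) < e))"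

text \<open>Positive side: reached by a geodesic leaving the line perpendicularly with
  normal i * kappa'(s), i.e. (tangent, normal) positively oriented.\<close>
definition pos_side :: "(real \<Rightarrow> complex) \<Rightarrow> complex \<Rightarrow> bool" where
  "pos_side \<kappa> y \<longleftrightarrow>
     (\<exists>s r \<gamma>. r > 0 \<and> geodesic_line \<gamma> \<and> \<gamma> 0 = \<kappa> s \<and>
        vector_derivative \<gamma> (at 0) = \<i> * vector_derivative \<kappa> (at s) \<and> \<gamma> r = y)"

definition nbhd_plus :: "(real \<Rightarrow> complex) \<Rightarrow> real \<Rightarrow> complex set" where
  "nbhd_plus \<kappa> \<rho> =
     {y\<in>disc. hdist_set y (range \<kappa>) < \<rho>} \<union>
     {y\<in>disc. hdist_set y (range \<kappa>) = \<rho> \<and> pos_side \<kappa> y}"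

definition geod_proj :: "(real \<Rightarrow> complex) \<Rightarrow> complex \<Rightarrow> complex" where
  "geod_proj \<kappa> y = (THE p. p \<in> range \<kappa> \<and> (\<forall>q\<in>range \<kappa>. hdist y p \<le> hdist y q))"

definition S_plus :: "(complex \<Rightarrow> complex) set \<Rightarrow> (real \<Rightarrow> complex) \<Rightarrow> real \<Rightarrow> complex \<Rightarrow> real set" where
  "S_plus G \<kappa> \<rho> x = \<kappa> -` (geod_proj \<kappa> ` (gorbit G x \<inter> nbhd_plus \<kappa> \<rho>))"

definition rel_dense :: "real \<Rightarrow> real set \<Rightarrow> bool" where
  "rel_dense \<epsilon> S \<longleftrightarrow> (\<forall>t. \<exists>s\<in>S. \<bar>t - s\<bar> \<le> \<epsilon>)"

end

theory Submission
  imports Defs "HOL-Complex_Analysis.Riemann_Mapping"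
begin

(* Cocompactness gives a compact K whose Gamma-translates cover the disc. Every geodesic line
   is t \<mapsto> c \<oplus> tanh(t/2) u with c = \<gamma>(0), |u| = 1 and \<oplus> the hyperbolic translation
   by c, which depends continuously on (c, u); so compactness of K \<times> S\<^sup>1 turns the hypothesis
   into a uniform hitting time: every geodesic line comes within \<rho> of the orbit Gamma x at
   some time |t| \<le> T. Applied to t \<mapsto> \<kappa>(s + t), this gives an orbit point y with
   d(y, \<kappa>(s + t)) < \<rho>; y lies in the open part of the neighbourhood of \<kappa>, and its
   projection \<kappa>(s') satisfies |s' - (s + t)| \<le> 2\<rho> by the triangle inequality, so S\<^sup>+ is
   (T + 2\<rho>)-relatively dense. *)

definition hdelta :: "complex \<Rightarrow> complex \<Rightarrow> real" where
  "hdelta z w = (cmod (z - w))^2 / ((1 - (cmod z)^2) * (1 - (cmod w)^2))"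

lemma mem_disc_iff: "z \<in> disc \<longleftrightarrow> cmod z < 1"
  by (simp add: disc_def)

lemma mem_disc_imp_norm_sq_less: "z \<in> disc \<Longrightarrow> (cmod z)^2 < 1"
  by (simp add: mem_disc_iff abs_square_less_1)

lemma zero_mem_disc [simp]: "0 \<in> disc"
  by (simp add: mem_disc_iff)

lemma hdist_eq_arcosh_hdelta: "hdist z w = arcosh (1 + 2 * hdelta z w)"
  by (simp add: hdist_def hdelta_def)

lemma hdelta_nonneg: "z \<in> disc \<Longrightarrow> w \<in> disc \<Longrightarrow> hdelta z w \<ge> 0"
  unfolding hdelta_def using mem_disc_imp_norm_sq_less[of z] mem_disc_imp_norm_sq_less[of w] by simp

lemma hdelta_commute: "hdelta z w = hdelta w z"
  by (simp add: hdelta_def norm_minus_commute mult.commute)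

lemma hdist_commute: "hdist z w = hdist w z"
  by (simp add: hdist_eq_arcosh_hdelta hdelta_commute)

lemma hdelta_refl [simp]: "hdelta z z = 0"
  by (simp add: hdelta_def)

lemma hdist_refl [simp]: "hdist z z = 0"
  by (simp add: hdist_eq_arcosh_hdelta)

lemma hdelta_eq_0_iff: "z \<in> disc \<Longrightarrow> w \<in> disc \<Longrightarrow> hdelta z w = 0 \<longleftrightarrow> z = w"
  unfolding hdelta_def using mem_disc_imp_norm_sq_less[of z] mem_disc_imp_norm_sq_less[of w] by simp

lemma hdist_nonneg: "z \<in> disc \<Longrightarrow> w \<in> disc \<Longrightarrow> hdist z w \<ge> 0"
  unfolding hdist_eq_arcosh_hdelta using hdelta_nonneg[of z w] by simp

lemma cosh_hdist: "z \<in> disc \<Longrightarrow> w \<in> disc \<Longrightarrow> cosh (hdist z w) = 1 + 2 * hdelta z w"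
  unfolding hdist_eq_arcosh_hdelta using hdelta_nonneg[of z w] by simp

lemma hdist_less_iff_hdelta_less:
  assumes "z \<in> disc" "w \<in> disc" "z' \<in> disc" "w' \<in> disc"
  shows "hdist z w < hdist z' w' \<longleftrightarrow> hdelta z w < hdelta z' w'"
  unfolding hdist_eq_arcosh_hdelta using hdelta_nonneg[OF assms(1,2)] hdelta_nonneg[OF assms(3,4)] by simp

lemma hdist_eq_iff_cosh:
  assumes "z \<in> disc" "w \<in> disc" "d \<ge> 0"
  shows "hdist z w = d \<longleftrightarrow> 1 + 2 * hdelta z w = cosh d"
  using assms cosh_hdist[OF assms(1,2)] by (auto simp: hdist_eq_arcosh_hdelta arcosh_cosh_real)

lemma hdist_le_iff_cosh:
  assumes "z \<in> disc" "w \<in> disc" "d \<ge> 0"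
  shows "hdist z w \<le> d \<longleftrightarrow> 1 + 2 * hdelta z w \<le> cosh d"
  using cosh_real_nonneg_le_iff[OF hdist_nonneg[OF assms(1,2)] assms(3)] cosh_hdist[OF assms(1,2)]
  by simp

lemma hdist_eq_iff_hdelta_eq:
  assumes "z \<in> disc" "w \<in> disc" "z' \<in> disc" "w' \<in> disc"
  shows "hdist z w = hdist z' w' \<longleftrightarrow> hdelta z w = hdelta z' w'"
proof
  assume "hdist z w = hdist z' w'"
  then show "hdelta z w = hdelta z' w'"
    using cosh_hdist[OF assms(1,2)] cosh_hdist[OF assms(3,4)] by simp
qed (simp add: hdist_eq_arcosh_hdelta)

section \<open>Moebius isometries of the disc\<close>

definition disc_moebius :: "complex \<Rightarrow> complex \<Rightarrow> complex \<Rightarrow> complex" where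
  "disc_moebius a b z = (a * z + b) / (cnj b * z + cnj a)"

lemma disc_moebius_denom_norm_identity:
  fixes a b z :: complex
  shows "(cmod (cnj b * z + cnj a))^2 - (cmod (a * z + b))^2 = ((cmod a)^2 - (cmod b)^2) * (1 - (cmod z)^2)"
  unfolding cmod_power2 by (simp add: algebra_simps power2_eq_square)

lemma disc_moebius_diff:
  fixes a b z w :: complex
  assumes "cnj b * z + cnj a \<noteq> 0" "cnj b * w + cnj a \<noteq> 0"
  shows "disc_moebius a b z - disc_moebius a b w
     = of_real ((cmod a)^2 - (cmod b)^2) * (z - w) / ((cnj b * z + cnj a) * (cnj b * w + cnj a))"
proof -
  have k: "of_real ((cmod a)^2 - (cmod b)^2) = a * cnj a - b * cnj b"
    by (simp only: of_real_diff complex_norm_square)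
  show ?thesis using assms unfolding k disc_moebius_def by (simp add: field_simps)
qed

lemma disc_moebius_denom_nonzero:
  assumes "cmod b < cmod a" "z \<in> disc"
  shows "cnj b * z + cnj a \<noteq> 0"
proof
  assume "cnj b * z + cnj a = 0"
  then have "cmod a = cmod b * cmod z"
    by (metis add_eq_0_iff complex_mod_cnj norm_minus_cancel norm_mult)
  also have "\<dots> \<le> cmod b"
    using assms(2) by (simp add: mem_disc_iff mult_left_le)
  finally show False using assms(1) by simp
qed

lemma one_minus_norm_disc_moebius_sq:
  assumes "cmod b < cmod a" "z \<in> disc"
  shows "1 - (cmod (disc_moebius a b z))^2
    = ((cmod a)^2 - (cmod b)^2) * (1 - (cmod z)^2) / (cmod (cnj b * z + cnj a))^2"
  using disc_moebius_denom_nonzero[OF assms] disc_moebius_denom_norm_identity[of b z a]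
  by (simp add: disc_moebius_def norm_divide power_divide field_simps)

lemma disc_moebius_in_disc:
  assumes "cmod b < cmod a" "z \<in> disc"
  shows "disc_moebius a b z \<in> disc"
proof -
  have "(cmod b)^2 < (cmod a)^2"
    using assms(1) by (simp add: power_strict_mono)
  then have "0 < ((cmod a)^2 - (cmod b)^2) * (1 - (cmod z)^2) / (cmod (cnj b * z + cnj a))^2"
    using mem_disc_imp_norm_sq_less[OF assms(2)] disc_moebius_denom_nonzero[OF assms] by simp
  then have "(cmod (disc_moebius a b z))^2 < 1"
    using one_minus_norm_disc_moebius_sq[OF assms] by simp
  then show ?thesis by (simp add: mem_disc_iff abs_square_less_1)
qed

lemma hdelta_disc_moebius:
  assumes ab: "cmod b < cmod a" and z: "z \<in> disc" and w: "w \<in> disc"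
  shows "hdelta (disc_moebius a b z) (disc_moebius a b w) = hdelta z w"
proof -
  define k where "k = (cmod a)^2 - (cmod b)^2"
  define Dz where "Dz = cmod (cnj b * z + cnj a)"
  define Dw where "Dw = cmod (cnj b * w + cnj a)"
  have "k > 0" using ab by (simp add: k_def power_strict_mono)
  moreover have "Dz > 0" "Dw > 0"
    using disc_moebius_denom_nonzero[OF ab] z w by (simp_all add: Dz_def Dw_def)
  ultimately have cancel: "M / ((k * Az / Dz^2) * (k * Aw / Dw^2)) = N / (Az * Aw)"
    if "M = k^2 * N / (Dz^2 * Dw^2)" for M N Az Aw
    using that by (simp add: field_simps power2_eq_square)
  have "cmod (disc_moebius a b z - disc_moebius a b w) = \<bar>k\<bar> * cmod (z - w) / (Dz * Dw)"
    unfolding disc_moebius_diff[OF disc_moebius_denom_nonzero[OF ab z] disc_moebius_denom_nonzero[OF ab w]]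
    by (simp only: norm_divide norm_mult norm_of_real k_def Dz_def Dw_def)
  then have "(cmod (disc_moebius a b z - disc_moebius a b w))^2 = k^2 * (cmod (z - w))^2 / (Dz^2 * Dw^2)"
    by (simp add: power_divide power_mult_distrib)
  then show ?thesis
    unfolding hdelta_def one_minus_norm_disc_moebius_sq[OF ab z] one_minus_norm_disc_moebius_sq[OF ab w]
      k_def [symmetric] Dz_def [symmetric] Dw_def [symmetric]
    by (rule cancel)
qed

lemma hdist_disc_moebius:
  assumes "cmod b < cmod a" "z \<in> disc" "w \<in> disc"
  shows "hdist (disc_moebius a b z) (disc_moebius a b w) = hdist z w"
  by (simp add: hdist_eq_arcosh_hdelta hdelta_disc_moebius[OF assms])

abbreviation htranslate :: "complex \<Rightarrow> complex \<Rightarrow> complex" where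
  "htranslate c \<equiv> disc_moebius 1 c"

lemma htranslate_in_disc: "c \<in> disc \<Longrightarrow> z \<in> disc \<Longrightarrow> htranslate c z \<in> disc"
  by (rule disc_moebius_in_disc) (simp_all add: mem_disc_iff)

lemma hdist_htranslate:
  "c \<in> disc \<Longrightarrow> z \<in> disc \<Longrightarrow> w \<in> disc \<Longrightarrow> hdist (htranslate c z) (htranslate c w) = hdist z w"
  by (rule hdist_disc_moebius) (simp_all add: mem_disc_iff)

lemma htranslate_neg_self [simp]: "htranslate (- c) c = 0"
  by (simp add: disc_moebius_def)

lemma htranslate_eq_Moebius_function: "htranslate c z = Moebius_function 0 (- c) z"
  by (simp add: disc_moebius_def Moebius_function_def add.commute)

lemma htranslate_inverse: "c \<in> disc \<Longrightarrow> z \<in> disc \<Longrightarrow> htranslate c (htranslate (- c) z) = z"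
  unfolding htranslate_eq_Moebius_function
  by (rule Moebius_function_compose) (simp_all add: mem_disc_iff)

lemma disc_isomE:
  assumes "disc_isom g"
  obtains a b where "cmod b < cmod a" "\<And>z. z \<in> disc \<Longrightarrow> g z = disc_moebius a b z"
proof -
  obtain a b where ab: "(cmod a)^2 - (cmod b)^2 = 1" "\<And>z. z \<in> disc \<Longrightarrow> g z = disc_moebius a b z"
    using assms unfolding disc_isom_def disc_moebius_def by blast
  then have "(cmod b)^2 < (cmod a)^2" by simp
  then have "cmod b < cmod a" by (rule power_less_imp_less_base) simp
  with ab(2) that show ?thesis by blast
qed

lemma disc_isom_in_disc: "disc_isom g \<Longrightarrow> z \<in> disc \<Longrightarrow> g z \<in> disc"
  by (metis disc_isomE disc_moebius_in_disc)

lemma hdist_disc_isom: "disc_isom g \<Longrightarrow> z \<in> disc \<Longrightarrow> w \<in> disc \<Longrightarrow> hdist (g z) (g w) = hdist z w"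
  by (metis disc_isomE hdist_disc_moebius)

lemma disc_isom_inj:
  assumes g: "disc_isom g"
  shows "inj g"
proof (rule injI)
  fix z w assume eq: "g z = g w"
  have out: "g v = v" if "v \<notin> disc" for v
    using g that by (simp add: disc_isom_def)
  consider "z \<in> disc" "w \<in> disc" | "z \<notin> disc" "w \<notin> disc"
    using eq out disc_isom_in_disc[OF g] by metis
  then show "z = w"
  proof cases
    case 1
    then have "hdist z w = hdist z z"
      using hdist_disc_isom[OF g] eq by (metis hdist_refl)
    then have "hdelta z w = 0"
      using 1 hdist_eq_iff_hdelta_eq[of z w z z] by simp
    then show ?thesis
      using 1 hdelta_eq_0_iff by blast
  next
    case 2
    then show ?thesis using eq out by simp
  qed
qed

lemma fundamental_polygon_subset_disc:
  assumes "fuchsian_group G" "fundamental_polygon G \<tau>"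
  shows "\<tau> \<subseteq> disc"
proof -
  have "id \<in> G" "(\<Union>g\<in>G. g ` \<tau>) = disc"
    using assms by (simp_all add: fundamental_polygon_def fuchsian_group_def)
  then show ?thesis
    using UN_upper[of id G "\<lambda>g. g ` \<tau>"] by simp
qed

lemma gorbit_subset_disc: "fuchsian_group G \<Longrightarrow> x \<in> disc \<Longrightarrow> gorbit G x \<subseteq> disc"
  by (auto simp: gorbit_def fuchsian_group_def disc_isom_in_disc)

lemma cosh_sinh_hdist_0:
  assumes "p \<in> disc"
  shows "cosh (hdist p 0) = (1 + (cmod p)^2) / (1 - (cmod p)^2)"
    and "sinh (hdist p 0) = 2 * cmod p / (1 - (cmod p)^2)"
proof -
  have r: "(cmod p)^2 < 1" using assms by (rule mem_disc_imp_norm_sq_less)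
  show c: "cosh (hdist p 0) = (1 + (cmod p)^2) / (1 - (cmod p)^2)"
    using cosh_hdist[OF assms zero_mem_disc] r by (simp add: hdelta_def field_simps)
  have "(sinh (hdist p 0))^2 = (cosh (hdist p 0))^2 - 1" by (simp add: cosh_square_eq)
  also have "\<dots> = (2 * cmod p / (1 - (cmod p)^2))^2" unfolding c using r
    by (simp add: divide_simps) (simp add: algebra_simps power2_eq_square)
  finally show "sinh (hdist p 0) = 2 * cmod p / (1 - (cmod p)^2)"
    using hdist_nonneg[OF assms zero_mem_disc] r by (subst (asm) power2_eq_iff_nonneg) auto
qed

lemma cosh_hdist_add_hdist_0:
  assumes p: "p \<in> disc" and q: "q \<in> disc"
  shows "cosh (hdist p 0 + hdist 0 q) = 1 + 2 * hdelta p q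
    + 2 * ((cmod p + cmod q)^2 - (cmod (p - q))^2) / ((1 - (cmod p)^2) * (1 - (cmod q)^2))"
  unfolding cosh_add hdist_commute[of 0 q] cosh_sinh_hdist_0[OF p] cosh_sinh_hdist_0[OF q] hdelta_def
  using mem_disc_imp_norm_sq_less[OF p] mem_disc_imp_norm_sq_less[OF q]
  by (simp add: divide_simps) (simp add: algebra_simps power2_eq_square)

lemma hdist_triangle_0:
  assumes p: "p \<in> disc" and q: "q \<in> disc"
  shows "hdist p q \<le> hdist p 0 + hdist 0 q"
proof -
  have "(cmod (p - q))^2 \<le> (cmod p + cmod q)^2"
    by (simp add: power_mono norm_triangle_ineq4)
  then have "0 \<le> 2 * ((cmod p + cmod q)^2 - (cmod (p - q))^2) / ((1 - (cmod p)^2) * (1 - (cmod q)^2))"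
    using mem_disc_imp_norm_sq_less[OF p] mem_disc_imp_norm_sq_less[OF q] by simp
  then show ?thesis
    using cosh_hdist_add_hdist_0[OF p q] hdist_nonneg[OF p zero_mem_disc] hdist_nonneg[OF zero_mem_disc q]
    by (subst hdist_le_iff_cosh[OF p q]) auto
qed

lemma hdist_triangle:
  assumes p: "p \<in> disc" and q: "q \<in> disc" and y: "y \<in> disc"
  shows "hdist p q \<le> hdist p y + hdist y q"
proof -
  have y': "- y \<in> disc" using y by (simp add: mem_disc_iff)
  have "hdist p q = hdist (htranslate (- y) p) (htranslate (- y) q)"
    by (simp add: hdist_htranslate[OF y' p q])
  also have "\<dots> \<le> hdist (htranslate (- y) p) 0 + hdist 0 (htranslate (- y) q)"
    by (intro hdist_triangle_0 htranslate_in_disc y' p q)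
  also have "\<dots> = hdist p y + hdist y q"
    using hdist_htranslate[OF y' p y] hdist_htranslate[OF y' y q] by simp
  finally show ?thesis .
qed

section \<open>Geodesic lines\<close>

definition diameter_line :: "complex \<Rightarrow> real \<Rightarrow> complex" where
  "diameter_line u t = of_real (tanh (t / 2)) * u"

lemma diameter_line_0 [simp]: "diameter_line u 0 = 0"
  by (simp add: diameter_line_def)

lemma diameter_line_uminus: "diameter_line u (- t) = - diameter_line u t"
  by (simp add: diameter_line_def)

lemma norm_diameter_line: "cmod u = 1 \<Longrightarrow> cmod (diameter_line u t) = \<bar>tanh (t / 2)\<bar>"
  by (simp add: diameter_line_def norm_mult)

lemma diameter_line_in_disc: "cmod u = 1 \<Longrightarrow> diameter_line u t \<in> disc"
  using tanh_real_bounds[of "t / 2"] by (simp add: norm_diameter_line mem_disc_iff abs_less_iff)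

lemma tanh_diff_sq_div:
  fixes a b :: real
  shows "(tanh a - tanh b)^2 / ((1 - (tanh a)^2) * (1 - (tanh b)^2)) = (sinh (a - b))^2"
proof -
  have one_minus_tanh_sq: "1 - (tanh c)^2 = 1 / (cosh c)^2" for c :: real
  proof -
    have "1 - (tanh c)^2 = ((cosh c)^2 - (sinh c)^2) / (cosh c)^2"
      by (simp add: tanh_def field_simps)
    then show ?thesis by (simp add: cosh_square_eq)
  qed
  show ?thesis
    unfolding one_minus_tanh_sq sinh_diff by (simp add: tanh_def field_simps power2_eq_square)
qed

lemma hdelta_diameter_line:
  assumes u: "cmod u = 1"
  shows "hdelta (diameter_line u s) (diameter_line u t) = (cosh (s - t) - 1) / 2"
proof -
  have "diameter_line u s - diameter_line u t = of_real (tanh (s/2) - tanh (t/2)) * u"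
    by (simp add: diameter_line_def algebra_simps)
  then have "(cmod (diameter_line u s - diameter_line u t))^2 = (tanh (s/2) - tanh (t/2))^2"
    using u by (simp add: norm_mult power2_abs del: of_real_diff)
  then have "hdelta (diameter_line u s) (diameter_line u t) = (sinh (s/2 - t/2))^2"
    unfolding hdelta_def norm_diameter_line[OF u] tanh_diff_sq_div[symmetric] by (simp add: power2_abs)
  also have "\<dots> = (cosh (s - t) - 1) / 2"
    using cosh_double[of "s/2 - t/2"] cosh_square_eq[of "s/2 - t/2"] by (simp add: algebra_simps)
  finally show ?thesis .
qed

lemma hdist_diameter_line:
  assumes "cmod u = 1"
  shows "hdist (diameter_line u s) (diameter_line u t) = \<bar>s - t\<bar>"
  by (subst hdist_eq_iff_cosh)
    (auto simp: diameter_line_in_disc[OF assms] hdelta_diameter_line[OF assms] field_simps)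

lemma geodesic_line_htranslate_diameter_line:
  assumes "c \<in> disc" "cmod u = 1"
  shows "geodesic_line (\<lambda>t. htranslate c (diameter_line u t))"
  unfolding geodesic_line_def
  using htranslate_in_disc[OF assms(1) diameter_line_in_disc[OF assms(2)]]
    hdist_htranslate[OF assms(1) diameter_line_in_disc[OF assms(2)] diameter_line_in_disc[OF assms(2)]]
    hdist_diameter_line[OF assms(2)]
  by auto

lemma geodesic_line_isometric_image:
  assumes "geodesic_line \<gamma>"
    and "\<And>z. z \<in> disc \<Longrightarrow> f z \<in> disc"
    and "\<And>z w. z \<in> disc \<Longrightarrow> w \<in> disc \<Longrightarrow> hdist (f z) (f w) = hdist z w"
  shows "geodesic_line (\<lambda>t. f (\<gamma> (s + t)))"
  using assms unfolding geodesic_line_def by (auto simp: image_subset_iff)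

lemma eq_of_real_mult_if_norms_eq:
  fixes p q :: complex and \<alpha> \<beta> :: real
  assumes "(cmod q)^2 = \<beta>^2" "(cmod p)^2 = \<alpha>^2" "(cmod (q - p))^2 = (\<beta> - \<alpha>)^2" "\<alpha> \<noteq> 0"
  shows "q = of_real (\<beta> / \<alpha>) * p"
proof -
  obtain q1 q2 where q: "q = Complex q1 q2" by (cases q)
  obtain p1 p2 where p: "p = Complex p1 p2" by (cases p)
  have H: "q1^2 + q2^2 = \<beta>^2" "p1^2 + p2^2 = \<alpha>^2" "(q1 - p1)^2 + (q2 - p2)^2 = (\<beta> - \<alpha>)^2"
    using assms(1-3) p q by (simp_all add: cmod_power2)
  then have S: "q1 * p1 + q2 * p2 = \<alpha> * \<beta>"
    by (simp add: power2_eq_square algebra_simps)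
  have "(\<alpha> * q1 - \<beta> * p1)^2 + (\<alpha> * q2 - \<beta> * p2)^2
      = \<alpha>^2 * (q1^2 + q2^2) + \<beta>^2 * (p1^2 + p2^2) - 2 * \<alpha> * \<beta> * (q1 * p1 + q2 * p2)"
    by (simp add: power2_eq_square algebra_simps)
  also have "\<dots> = 0" unfolding H(1,2) S by (simp add: power2_eq_square)
  finally have "\<alpha> * q1 = \<beta> * p1" "\<alpha> * q2 = \<beta> * p2"
    by (simp_all add: sum_power2_eq_zero_iff)
  then show ?thesis using p q assms(4) by (simp add: complex_eq_iff field_simps)
qed

lemma hdist_0_eq_iff_norm_eq:
  assumes "p \<in> disc" "q \<in> disc"
  shows "hdist 0 p = hdist 0 q \<longleftrightarrow> cmod p = cmod q"
proof -
  have "hdist 0 p = hdist 0 q \<longleftrightarrow> (cmod p)^2 / (1 - (cmod p)^2) = (cmod q)^2 / (1 - (cmod q)^2)"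
    using hdist_eq_iff_hdelta_eq[OF zero_mem_disc assms(1) zero_mem_disc assms(2)] by (simp add: hdelta_def)
  also have "\<dots> \<longleftrightarrow> (cmod p)^2 = (cmod q)^2"
    using mem_disc_imp_norm_sq_less[OF assms(1)] mem_disc_imp_norm_sq_less[OF assms(2)]
    by (simp add: field_simps)
  finally show ?thesis by (simp add: power2_eq_iff_nonneg)
qed

lemma geodesic_line_through_0:
  assumes g: "geodesic_line \<gamma>" and g0: "\<gamma> 0 = 0"
  obtains u where "cmod u = 1" "\<gamma> = diameter_line u"
proof -
  have gd: "\<gamma> t \<in> disc" for t using g by (auto simp: geodesic_line_def)
  have gh: "hdist (\<gamma> s) (\<gamma> t) = \<bar>s - t\<bar>" for s t using g by (simp add: geodesic_line_def)
  (* Distances to \<gamma> 0 = 0 fix the norms |\<gamma> t|; distances to \<gamma> 1 then fix |\<gamma> t - \<gamma> 1|,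
     which forces \<gamma> t onto the diameter through \<gamma> 1. *)
  have norm_\<gamma>: "cmod (\<gamma> t) = \<bar>tanh (t / 2)\<bar>" for t
  proof -
    have "hdist 0 (\<gamma> t) = hdist 0 (diameter_line 1 t)"
      using gh[of 0 t] g0 hdist_diameter_line[of 1 0 t] by simp
    then show ?thesis
      using hdist_0_eq_iff_norm_eq[OF gd diameter_line_in_disc] norm_diameter_line[of 1 t] by simp
  qed
  define \<alpha> where "\<alpha> = tanh (1 / 2 :: real)"
  have "\<alpha> > 0" by (simp add: \<alpha>_def)
  define u where "u = \<gamma> 1 / of_real \<alpha>"
  have u: "cmod u = 1" using norm_\<gamma>[of 1] \<open>\<alpha> > 0\<close> by (simp add: u_def \<alpha>_def norm_divide)
  have "\<gamma> t = diameter_line u t" for t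
  proof -
    have "hdist (\<gamma> t) (\<gamma> 1) = hdist (diameter_line u t) (diameter_line u 1)"
      using gh hdist_diameter_line[OF u] by simp
    then have "hdelta (\<gamma> t) (\<gamma> 1) = hdelta (diameter_line u t) (diameter_line u 1)"
      by (simp add: hdist_eq_iff_hdelta_eq gd diameter_line_in_disc[OF u])
    moreover have "cmod (diameter_line u s) = cmod (\<gamma> s)" for s
      using norm_\<gamma> norm_diameter_line[OF u] by simp
    moreover have "(1 - (cmod (\<gamma> t))^2) * (1 - (cmod (\<gamma> 1))^2) \<noteq> 0"
      using mem_disc_imp_norm_sq_less[OF gd] by (simp add: less_le)
    ultimately have "(cmod (\<gamma> t - \<gamma> 1))^2 = (cmod (diameter_line u t - diameter_line u 1))^2"
      by (simp add: hdelta_def)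
    also have "diameter_line u t - diameter_line u 1 = of_real (tanh (t / 2) - \<alpha>) * u"
      by (simp add: diameter_line_def \<alpha>_def algebra_simps)
    finally have "(cmod (\<gamma> t - \<gamma> 1))^2 = (tanh (t / 2) - \<alpha>)^2"
      using u by (simp add: norm_mult power2_abs del: of_real_diff)
    then have "\<gamma> t = of_real (tanh (t / 2) / \<alpha>) * \<gamma> 1"
      using eq_of_real_mult_if_norms_eq[of "\<gamma> t" "tanh (t / 2)" "\<gamma> 1" \<alpha>] norm_\<gamma> \<open>\<alpha> > 0\<close>
      by (simp add: \<alpha>_def power2_abs)
    then show ?thesis using \<open>\<alpha> > 0\<close> by (simp add: diameter_line_def u_def)
  qed
  then show ?thesis using that u by blast
qed

lemma geodesic_line_eq_htranslate_diameter_line: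
  assumes g: "geodesic_line \<gamma>"
  obtains u where "cmod u = 1" "\<And>t. \<gamma> t = htranslate (\<gamma> 0) (diameter_line u t)"
proof -
  have gd: "\<gamma> t \<in> disc" for t using g by (auto simp: geodesic_line_def)
  then have c: "- \<gamma> 0 \<in> disc" by (simp add: mem_disc_iff)
  have "geodesic_line (\<lambda>t. htranslate (- \<gamma> 0) (\<gamma> (0 + t)))"
    by (rule geodesic_line_isometric_image[OF g htranslate_in_disc[OF c] hdist_htranslate[OF c]])
  then obtain u where u: "cmod u = 1" "(\<lambda>t. htranslate (- \<gamma> 0) (\<gamma> t)) = diameter_line u"
    by (auto elim: geodesic_line_through_0)
  have "\<gamma> t = htranslate (\<gamma> 0) (diameter_line u t)" for t
    using htranslate_inverse[OF gd[of 0] gd[of t]] fun_cong[OF u(2), of t] by simp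
  with u(1) that show ?thesis by blast
qed

lemma continuous_on_htranslate:
  assumes "continuous_on S f" "continuous_on S g" "\<And>x. x \<in> S \<Longrightarrow> f x \<in> disc \<and> g x \<in> disc"
  shows "continuous_on S (\<lambda>x. htranslate (f x) (g x))"
proof -
  have "cnj (f x) * g x + 1 \<noteq> 0" if "x \<in> S" for x
    using disc_moebius_denom_nonzero[of "f x" 1 "g x"] assms(3)[OF that] by (simp add: mem_disc_iff)
  then show ?thesis
    unfolding disc_moebius_def using assms(1,2) by (intro continuous_intros) auto
qed

lemma continuous_on_hdist:
  assumes "continuous_on S f" "continuous_on S g" "\<And>x. x \<in> S \<Longrightarrow> f x \<in> disc \<and> g x \<in> disc"
  shows "continuous_on S (\<lambda>x. hdist (f x) (g x))"
proof -
  have "(1 - (cmod (f x))^2) * (1 - (cmod (g x))^2) \<noteq> 0" if "x \<in> S" for x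
    using assms(3)[OF that] mem_disc_imp_norm_sq_less by (simp add: less_le)
  then have "continuous_on S (\<lambda>x. 1 + 2 * hdelta (f x) (g x))"
    unfolding hdelta_def using assms(1,2) by (intro continuous_intros) auto
  moreover have "(\<lambda>x. 1 + 2 * hdelta (f x) (g x)) ` S \<subseteq> {1..}"
    using assms(3) hdelta_nonneg by force
  ultimately show ?thesis
    unfolding hdist_eq_arcosh_hdelta
    by (rule continuous_on_compose2[OF continuous_on_arcosh[OF order.refl]])
qed

lemma geodesic_line_continuous:
  assumes "geodesic_line \<gamma>"
  shows "continuous_on UNIV \<gamma>"
proof -
  obtain u where u: "cmod u = 1" "\<And>t. \<gamma> t = htranslate (\<gamma> 0) (diameter_line u t)"
    using geodesic_line_eq_htranslate_diameter_line[OF assms] by blast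
  have "\<gamma> 0 \<in> disc" using assms by (auto simp: geodesic_line_def)
  moreover have "continuous_on UNIV (\<lambda>t. diameter_line u t)"
    unfolding diameter_line_def by (intro continuous_intros) auto
  ultimately have "continuous_on UNIV (\<lambda>t. htranslate (\<gamma> 0) (diameter_line u t))"
    by (intro continuous_on_htranslate continuous_on_const) (auto simp: diameter_line_in_disc[OF u(1)])
  then show ?thesis by (simp flip: u(2))
qed

lemma hdist_0_less_if_equidistant:
  assumes Y: "Y \<in> disc" and P: "P \<in> disc" "P \<noteq> 0" and eq: "hdist Y (- P) = hdist Y P"
  shows "hdist Y 0 < hdist Y P"
proof -
  have "- P \<in> disc" using P(1) by (simp add: mem_disc_iff)
  then have "hdelta Y (- P) = hdelta Y P"
    using eq hdist_eq_iff_hdelta_eq[OF Y _ Y P(1)] by blast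
  moreover have y: "(cmod Y)^2 < 1" and p: "(cmod P)^2 < 1"
    using mem_disc_imp_norm_sq_less Y P(1) by auto
  ultimately have "(cmod (Y + P))^2 = (cmod (Y - P))^2"
    by (simp add: hdelta_def)
  (* parallelogram law: equidistance from P and -P means Y is orthogonal to P *)
  moreover have "(cmod (Y - P))^2 + (cmod (Y + P))^2 = 2 * (cmod Y)^2 + 2 * (cmod P)^2"
    unfolding cmod_power2 by (simp add: power2_eq_square algebra_simps)
  ultimately have YP: "(cmod (Y - P))^2 = (cmod Y)^2 + (cmod P)^2"
    by simp
  have "hdelta Y 0 = (cmod Y)^2 * (1 - (cmod P)^2) / ((1 - (cmod Y)^2) * (1 - (cmod P)^2))"
    using p by (simp add: hdelta_def)
  also have "\<dots> < ((cmod Y)^2 + (cmod P)^2) / ((1 - (cmod Y)^2) * (1 - (cmod P)^2))"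
  proof (rule divide_strict_right_mono)
    show "(cmod Y)^2 * (1 - (cmod P)^2) < (cmod Y)^2 + (cmod P)^2"
      using P(2) by (simp add: algebra_simps add_pos_nonneg)
    show "0 < (1 - (cmod Y)^2) * (1 - (cmod P)^2)"
      using y p by simp
  qed
  also have "\<dots> = hdelta Y P"
    by (simp add: hdelta_def YP)
  finally show ?thesis
    using hdist_less_iff_hdelta_less[OF Y zero_mem_disc Y P(1)] by simp
qed

lemma geodesic_line_nearest_point_unique:
  assumes g: "geodesic_line \<kappa>" and y: "y \<in> disc"
    and a: "\<forall>t. hdist y (\<kappa> a) \<le> hdist y (\<kappa> t)" and b: "\<forall>t. hdist y (\<kappa> b) \<le> hdist y (\<kappa> t)"
  shows "a = b"
proof -
  have gd: "\<kappa> t \<in> disc" for t using g by (auto simp: geodesic_line_def)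
  (* Translating the midpoint \<kappa> m of two nearest points to 0, y becomes equidistant from two
     antipodal points \<plusminus>P of a diameter, hence strictly closer to 0 = \<kappa> m. *)
  have False if ab: "a < b" and a: "\<forall>t. hdist y (\<kappa> a) \<le> hdist y (\<kappa> t)"
    and b: "\<forall>t. hdist y (\<kappa> b) \<le> hdist y (\<kappa> t)" for a b
  proof -
    define m where "m = (a + b) / 2"
    define e where "e = (b - a) / 2"
    have "e > 0" using ab by (simp add: e_def)
    have c: "- \<kappa> m \<in> disc" using gd by (simp add: mem_disc_iff)
    have "geodesic_line (\<lambda>t. htranslate (- \<kappa> m) (\<kappa> (m + t)))"
      by (rule geodesic_line_isometric_image[OF g htranslate_in_disc[OF c] hdist_htranslate[OF c]])
    then obtain u where u: "cmod u = 1" "(\<lambda>t. htranslate (- \<kappa> m) (\<kappa> (m + t))) = diameter_line u"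
      by (auto elim: geodesic_line_through_0)
    define Y where "Y = htranslate (- \<kappa> m) y"
    have Y: "Y \<in> disc" by (simp add: Y_def htranslate_in_disc[OF c y])
    have dist_Y: "hdist y (\<kappa> (m + t)) = hdist Y (diameter_line u t)" for t
      by (metis Y_def hdist_htranslate[OF c y gd] fun_cong[OF u(2), of t])
    define P where "P = diameter_line u e"
    have P: "P \<in> disc" "P \<noteq> 0"
      using diameter_line_in_disc[OF u(1)] norm_diameter_line[OF u(1), of e] \<open>e > 0\<close>
      by (auto simp: P_def)
    have "m + - e = a" "m + e = b" "m + 0 = m" by (simp_all add: m_def e_def field_simps)
    then have "hdist y (\<kappa> a) = hdist Y (- P)" "hdist y (\<kappa> b) = hdist Y P" "hdist y (\<kappa> m) = hdist Y 0"
      using dist_Y[of "- e"] dist_Y[of e] dist_Y[of 0] by (simp_all add: P_def diameter_line_uminus)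
    moreover have "hdist y (\<kappa> a) = hdist y (\<kappa> b)" using a b by (meson order_antisym)
    ultimately have "hdist y (\<kappa> m) < hdist y (\<kappa> b)"
      using hdist_0_less_if_equidistant[OF Y P] by simp
    then show False using b by (meson not_le)
  qed
  then show ?thesis using a b by (meson linorder_neqE_linordered_idom)
qed

lemma geodesic_line_nearest_point_exists:
  assumes g: "geodesic_line \<kappa>" and y: "y \<in> disc"
  obtains s where "\<forall>t. hdist y (\<kappa> s) \<le> hdist y (\<kappa> t)"
proof -
  have gd: "\<kappa> t \<in> disc" for t using g by (auto simp: geodesic_line_def)
  define f where "f t = hdist y (\<kappa> t)" for t
  have "continuous_on UNIV f"
    unfolding f_def by (intro continuous_on_hdist continuous_on_const geodesic_line_continuous[OF g])
      (simp add: y gd)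
  define R where "R = 2 * f 0 + 1"
  have "f 0 \<ge> 0" using hdist_nonneg[OF y gd] by (simp add: f_def)
  then have "{-R..R} \<noteq> {}" by (simp add: R_def)
  then obtain s where s: "\<And>t. t \<in> {-R..R} \<Longrightarrow> f s \<le> f t"
    using continuous_attains_inf[OF compact_Icc _ continuous_on_subset[OF \<open>continuous_on UNIV f\<close>]]
    by blast
  have "f s \<le> f t" for t
  proof (cases "t \<in> {-R..R}")
    case False
    have "\<bar>0 - t\<bar> \<le> hdist (\<kappa> 0) y + hdist y (\<kappa> t)"
      using hdist_triangle[OF gd[of 0] gd[of t] y] g by (simp add: geodesic_line_def)
    then have "\<bar>t\<bar> \<le> f 0 + f t" by (simp add: f_def hdist_commute)
    moreover have "f s \<le> f 0" using s[of 0] \<open>f 0 \<ge> 0\<close> by (simp add: R_def)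
    ultimately show ?thesis using False by (auto simp: R_def)
  qed (use s in auto)
  then show ?thesis using that by (auto simp: f_def)
qed

lemma geod_proj_eqI:
  assumes g: "geodesic_line \<kappa>" and y: "y \<in> disc" and s: "\<forall>t. hdist y (\<kappa> s) \<le> hdist y (\<kappa> t)"
  shows "geod_proj \<kappa> y = \<kappa> s"
  unfolding geod_proj_def
proof (rule the_equality)
  show "\<kappa> s \<in> range \<kappa> \<and> (\<forall>q\<in>range \<kappa>. hdist y (\<kappa> s) \<le> hdist y q)"
    using s by auto
next
  fix p assume "p \<in> range \<kappa> \<and> (\<forall>q\<in>range \<kappa>. hdist y p \<le> hdist y q)"
  then obtain s' where "p = \<kappa> s'" "\<forall>t. hdist y (\<kappa> s') \<le> hdist y (\<kappa> t)" by auto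
  then show "p = \<kappa> s" using geodesic_line_nearest_point_unique[OF g y _ s] by simp
qed

section \<open>Uniform hitting time\<close>

lemma open_near_htranslate_diameter_line:
  assumes "y \<in> disc"
  shows "open {(c, u). c \<in> disc \<and> diameter_line u t \<in> disc
                \<and> hdist (htranslate c (diameter_line u t)) y < \<rho>}"
proof -
  define A where "A = {p. cmod (fst p) < 1 \<and> cmod (diameter_line (snd p) t) < 1}"
  have A: "open A"
    unfolding A_def diameter_line_def by (intro open_Collect_conj open_Collect_less continuous_intros)
  have "fst p \<in> disc" "diameter_line (snd p) t \<in> disc" if "p \<in> A" for p
    using that by (simp_all add: A_def mem_disc_iff)
  moreover have "continuous_on A (\<lambda>p. diameter_line (snd p) t)"
    unfolding diameter_line_def by (intro continuous_intros) auto
  ultimately have "continuous_on A (\<lambda>p. hdist (htranslate (fst p) (diameter_line (snd p) t)) y)"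
    using assms
    by (intro continuous_on_hdist continuous_on_htranslate continuous_on_const continuous_on_fst
        continuous_on_id) (auto intro: htranslate_in_disc)
  with A have "open (A \<inter> (\<lambda>p. hdist (htranslate (fst p) (diameter_line (snd p) t)) y) -` {..<\<rho>})"
    by (intro continuous_open_preimage) auto
  also have "\<dots> = {(c, u). c \<in> disc \<and> diameter_line u t \<in> disc
                \<and> hdist (htranslate c (diameter_line u t)) y < \<rho>}"
    by (auto simp: A_def mem_disc_iff)
  finally show ?thesis .
qed

lemma uniform_hitting_time_compact:
  assumes K: "compact K" "K \<subseteq> disc" and Y: "Y \<subseteq> disc"
    and hit: "\<forall>\<gamma>. geodesic_line \<gamma> \<longrightarrow> (\<exists>t. \<exists>y\<in>Y. hdist (\<gamma> t) y < \<rho>)"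
  obtains T where "\<And>\<gamma>. geodesic_line \<gamma> \<Longrightarrow> \<gamma> 0 \<in> K \<Longrightarrow> \<exists>t. \<bar>t\<bar> \<le> T \<and> (\<exists>y\<in>Y. hdist (\<gamma> t) y < \<rho>)"
proof -
  define U where "U = (\<lambda>(t, y). {(c, u). c \<in> disc \<and> diameter_line u t \<in> disc
                \<and> hdist (htranslate c (diameter_line u t)) y < \<rho>})"
  have "K \<times> sphere 0 1 \<subseteq> (\<Union>ty\<in>UNIV \<times> Y. U ty)"
  proof clarify
    fix c u :: complex assume cu: "c \<in> K" "u \<in> sphere 0 1"
    then have "c \<in> disc" "cmod u = 1" using K(2) by auto
    then obtain t y where "y \<in> Y" "hdist (htranslate c (diameter_line u t)) y < \<rho>"
      using hit geodesic_line_htranslate_diameter_line by blast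
    then show "(c, u) \<in> (\<Union>ty\<in>UNIV \<times> Y. U ty)"
      using \<open>c \<in> disc\<close> diameter_line_in_disc[OF \<open>cmod u = 1\<close>] by (auto simp: U_def)
  qed
  moreover have "open (U ty)" if "ty \<in> UNIV \<times> Y" for ty
    using that Y open_near_htranslate_diameter_line by (auto simp: U_def)
  ultimately obtain C where C: "C \<subseteq> UNIV \<times> Y" "finite C" "K \<times> sphere 0 1 \<subseteq> (\<Union>ty\<in>C. U ty)"
    using compactE_image[OF compact_Times[OF K(1) compact_sphere]] by metis
  define T where "T = (\<Sum>ty\<in>C. \<bar>fst ty\<bar>)"
  have "\<exists>t. \<bar>t\<bar> \<le> T \<and> (\<exists>y\<in>Y. hdist (\<gamma> t) y < \<rho>)"
    if \<gamma>: "geodesic_line \<gamma>" and \<gamma>0: "\<gamma> 0 \<in> K" for \<gamma>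
  proof -
    obtain u where u: "cmod u = 1" "\<And>t. \<gamma> t = htranslate (\<gamma> 0) (diameter_line u t)"
      using geodesic_line_eq_htranslate_diameter_line[OF \<gamma>] by blast
    have "(\<gamma> 0, u) \<in> K \<times> sphere 0 1" using \<gamma>0 u(1) by simp
    then obtain ty where "ty \<in> C" "(\<gamma> 0, u) \<in> U ty"
      using C(3) by blast
    then obtain t y where ty: "(t, y) \<in> C" "(\<gamma> 0, u) \<in> U (t, y)"
      by (metis surj_pair)
    have "\<bar>t\<bar> \<le> T"
      unfolding T_def using member_le_sum[OF ty(1), of "\<lambda>ty. \<bar>fst ty\<bar>"] C(2) by simp
    moreover have "hdist (\<gamma> t) y < \<rho>" "y \<in> Y"
      using ty C(1) by (auto simp: U_def simp flip: u(2))
    ultimately show ?thesis by blast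
  qed
  then show ?thesis using that by blast
qed

lemma uniform_hitting_time:
  assumes G: "cocompact_fuchsian G" and x: "x \<in> disc"
    and hit: "\<forall>\<gamma>. geodesic_line \<gamma> \<longrightarrow> (\<exists>t. \<exists>g\<in>G. hdist (\<gamma> t) (g x) < \<rho>)"
  obtains T where "\<And>\<gamma>. geodesic_line \<gamma> \<Longrightarrow> \<exists>t. \<bar>t\<bar> \<le> T \<and> (\<exists>g\<in>G. hdist (\<gamma> t) (g x) < \<rho>)"
proof -
  have fG: "fuchsian_group G" using G by (simp add: cocompact_fuchsian_def)
  then have isom: "disc_isom g" and inv: "inv g \<in> G" if "g \<in> G" for g
    using that by (auto simp: fuchsian_group_def)
  have comp: "g \<circ> h \<in> G" if "g \<in> G" "h \<in> G" for g h
    using fG that by (auto simp: fuchsian_group_def)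
  obtain K where K: "compact K" "K \<subseteq> disc" "(\<Union>g\<in>G. g ` K) = disc"
    using G by (auto simp: cocompact_fuchsian_def)
  have "\<forall>\<gamma>. geodesic_line \<gamma> \<longrightarrow> (\<exists>t. \<exists>y\<in>gorbit G x. hdist (\<gamma> t) y < \<rho>)"
    using hit by (auto simp: gorbit_def)
  then obtain T where T: "\<And>\<gamma>. geodesic_line \<gamma> \<Longrightarrow> \<gamma> 0 \<in> K \<Longrightarrow> \<exists>t. \<bar>t\<bar> \<le> T \<and> (\<exists>y\<in>gorbit G x. hdist (\<gamma> t) y < \<rho>)"
    using uniform_hitting_time_compact[OF K(1,2) gorbit_subset_disc[OF fG x]] by blast
  have "\<exists>t. \<bar>t\<bar> \<le> T \<and> (\<exists>g\<in>G. hdist (\<gamma> t) (g x) < \<rho>)" if \<gamma>: "geodesic_line \<gamma>" for \<gamma>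
  proof -
    have "\<gamma> 0 \<in> disc" using \<gamma> by (auto simp: geodesic_line_def)
    then obtain h k where hk: "h \<in> G" "k \<in> K" "\<gamma> 0 = h k" using K(3) by blast
    have inv_h: "inv h (h z) = z" for z using disc_isom_inj[OF isom[OF hk(1)]] by simp
    have "geodesic_line (\<lambda>t. inv h (\<gamma> (0 + t)))"
      using isom[OF inv[OF hk(1)]] disc_isom_in_disc hdist_disc_isom
      by (intro geodesic_line_isometric_image[OF \<gamma>]) blast+
    moreover have "inv h (\<gamma> 0) \<in> K" using hk inv_h by simp
    ultimately obtain t g where t: "\<bar>t\<bar> \<le> T" "g \<in> G" "hdist (inv h (\<gamma> t)) (g x) < \<rho>"
      using T[of "\<lambda>t. inv h (\<gamma> t)"] by (auto simp: gorbit_def)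
    have "hdist (inv h (\<gamma> t)) (g x) = hdist (inv h (\<gamma> t)) (inv h (h (g x)))"
      by (simp add: inv_h)
    also have "\<dots> = hdist (\<gamma> t) ((h \<circ> g) x)"
      using \<gamma> x t(2) hk(1) isom[OF inv[OF hk(1)]] isom disc_isom_in_disc
      by (auto simp: geodesic_line_def intro!: hdist_disc_isom)
    finally have "hdist (\<gamma> t) ((h \<circ> g) x) < \<rho>"
      using t(3) by simp
    then show ?thesis using t(1) comp[OF hk(1) t(2)] by blast
  qed
  then show ?thesis using that by blast
qed

lemma S_plus_near_orbit_point:
  assumes \<kappa>: "geodesic_line \<kappa>" and y: "y \<in> gorbit G x" "y \<in> disc" and near: "hdist y (\<kappa> r) < \<rho>"
  obtains s where "s \<in> S_plus G \<kappa> \<rho> x" "\<bar>s - r\<bar> \<le> 2 * \<rho>"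
proof -
  have \<kappa>d: "\<kappa> t \<in> disc" for t using \<kappa> by (auto simp: geodesic_line_def)
  have "hdist_set y (range \<kappa>) \<le> hdist y (\<kappa> r)"
    unfolding hdist_set_def using hdist_nonneg[OF y(2) \<kappa>d]
    by (intro cINF_lower bdd_belowI[of _ 0]) auto
  then have "y \<in> gorbit G x \<inter> nbhd_plus \<kappa> \<rho>"
    using y near by (simp add: nbhd_plus_def)
  obtain s where s: "\<forall>t. hdist y (\<kappa> s) \<le> hdist y (\<kappa> t)"
    using geodesic_line_nearest_point_exists[OF \<kappa> y(2)] by blast
  with \<open>y \<in> gorbit G x \<inter> nbhd_plus \<kappa> \<rho>\<close> have "s \<in> S_plus G \<kappa> \<rho> x"
    unfolding S_plus_def using geod_proj_eqI[OF \<kappa> y(2) s] by (metis image_eqI vimageI)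
  moreover have "\<bar>s - r\<bar> \<le> 2 * \<rho>"
  proof -
    have "\<bar>s - r\<bar> = hdist (\<kappa> s) (\<kappa> r)" using \<kappa> by (simp add: geodesic_line_def)
    also have "\<dots> \<le> hdist (\<kappa> s) y + hdist y (\<kappa> r)" by (rule hdist_triangle[OF \<kappa>d \<kappa>d y(2)])
    also have "\<dots> \<le> 2 * \<rho>" using s[rule_format, of r] near by (simp add: hdist_commute)
    finally show ?thesis .
  qed
  ultimately show ?thesis using that by blast
qed

theorem lemma3p3:
  fixes G :: "(complex \<Rightarrow> complex) set" and \<tau> :: "complex set"
    and \<kappa> :: "real \<Rightarrow> complex" and x :: complex and \<rho> :: real
  assumes "cocompact_fuchsian G"
    and "fundamental_polygon G \<tau>"
    and "side_pairings_not_self_inverse G \<tau>"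
    and "geodesic_line \<kappa>"
    and "dense_geodesic G \<kappa>"
    and "x \<in> interior \<tau>"
    and "\<rho> > 0"
    and "\<forall>\<gamma>. geodesic_line \<gamma> \<longrightarrow> (\<exists>t. \<exists>g\<in>G. hdist (\<gamma> t) (g x) < \<rho>)"
  shows "\<exists>\<epsilon>>0. rel_dense \<epsilon> (S_plus G \<kappa> \<rho> x)"
proof -
  have fG: "fuchsian_group G" using assms(1) by (simp add: cocompact_fuchsian_def)
  have x: "x \<in> disc"
    using fundamental_polygon_subset_disc[OF fG assms(2)] assms(6) interior_subset by blast
  obtain T where T: "\<And>\<gamma>. geodesic_line \<gamma> \<Longrightarrow> \<exists>t. \<bar>t\<bar> \<le> T \<and> (\<exists>g\<in>G. hdist (\<gamma> t) (g x) < \<rho>)"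
    using uniform_hitting_time[OF assms(1) x assms(8)] by blast
  have "\<exists>s'\<in>S_plus G \<kappa> \<rho> x. \<bar>s - s'\<bar> \<le> \<bar>T\<bar> + 2 * \<rho>" for s
  proof -
    have "geodesic_line (\<lambda>t. id (\<kappa> (s + t)))"
      using assms(4) by (intro geodesic_line_isometric_image) auto
    then obtain t g where t: "\<bar>t\<bar> \<le> T" "g \<in> G" "hdist (\<kappa> (s + t)) (g x) < \<rho>"
      using T by fastforce
    moreover have "g x \<in> gorbit G x" "g x \<in> disc"
      using t(2) gorbit_subset_disc[OF fG x] by (auto simp: gorbit_def)
    ultimately obtain s' where "s' \<in> S_plus G \<kappa> \<rho> x" "\<bar>s' - (s + t)\<bar> \<le> 2 * \<rho>"
      using S_plus_near_orbit_point[OF assms(4)] by (metis hdist_commute)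
    with t(1) show ?thesis by force
  qed
  then show ?thesis
    using assms(7) by (intro exI[of _ "\<bar>T\<bar> + 2 * \<rho>"]) (auto simp: rel_dense_def)
qed

end
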